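(* Let $G_1,G_2,\dots$ be i.i.d. $N(0,1)$ random variables and $\{\alpha_{jk}:j,k\ge1\}$ deterministic real numbers such that $\sum_{j,k=1}^{2n}\alpha_{jk}G_jG_k\to Z$ in probability as $n\to\infty$ for some finite random variable $Z$. If $\alpha_{11}\ne0$, then $Z$ has a continuous distribution, i.e. $P(Z=z)=0$ for every $z\in\mathbb R$. *)

theory Defs
  imports "HOL-Probability.Probability"
begin

definition conv_in_prob :: "'a measure \<Rightarrow> (nat \<Rightarrow> 'a \<Rightarrow> real) \<Rightarrow> ('a \<Rightarrow> real) \<Rightarrow> bool" where
  "conv_in_prob M X Z \<longleftrightarrow>
     (\<forall>e>0. (\<lambda>n. measure M {x \<in> space M. e \<le> \<bar>X n x - Z x\<bar>}) \<longlonglongrightarrow> 0)"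

end

theory Submission
  imports Defs "HOL-Computational_Algebra.Polynomial"
begin

text \<open>Pass to an almost surely convergent subsequence. With \<open>G\<^sub>2, G\<^sub>3, \<dots>\<close> fixed, every partial
  sum is a quadratic polynomial in \<open>G\<^sub>1\<close> with the same leading coefficient \<open>\<alpha>\<^sub>1\<^sub>1\<close>; convergence
  at two distinct values of \<open>G\<^sub>1\<close> forces the other two coefficients to converge, so
  \<open>Z = \<alpha>\<^sub>1\<^sub>1 G\<^sub>1\<^sup>2 + B G\<^sub>1 + C\<close> with \<open>B, C\<close> functions of \<open>G\<^sub>2, G\<^sub>3, \<dots>\<close> only. Hence every
  level set of \<open>Z\<close> meets each section in at most two values of \<open>G\<^sub>1\<close>, which have probability
  zero because \<open>G\<^sub>1\<close> has a density and is independent of \<open>G\<^sub>2, G\<^sub>3, \<dots>\<close>; Fubini concludes.\<close>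

definition quadratic_form :: "(nat \<Rightarrow> nat \<Rightarrow> 'a::comm_ring_1) \<Rightarrow> nat \<Rightarrow> (nat \<Rightarrow> 'a) \<Rightarrow> 'a" where
  "quadratic_form \<alpha> m x = (\<Sum>j=1..m. \<Sum>k=1..m. \<alpha> j k * x j * x k)"

lemma quadratic_form_fun_upd_first:
  assumes "1 \<le> m"
  shows "quadratic_form \<alpha> m (v(1 := g))
       = \<alpha> 1 1 * g^2 + (\<Sum>k=2..m. (\<alpha> 1 k + \<alpha> k 1) * v k) * g
         + (\<Sum>j=2..m. \<Sum>k=2..m. \<alpha> j k * v j * v k)"
proof -
  have split: "(\<Sum>j=1..m. F j) = F 1 + (\<Sum>j=2..m. F j)" for F :: "nat \<Rightarrow> 'a"
    using assms by (simp add: sum.atLeast_Suc_atMost numeral_2_eq_2)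
  have upd: "(\<Sum>j=2..m. F j ((v(1 := g)) j)) = (\<Sum>j=2..m. F j (v j))" for F :: "nat \<Rightarrow> 'a \<Rightarrow> 'a"
    by (rule sum.cong) auto
  show ?thesis
    unfolding quadratic_form_def split
    by (simp add: upd sum.distrib sum_distrib_left sum_distrib_right algebra_simps power2_eq_square)
qed

lemma eventually_quadratic_form_fun_upd_first:
  assumes "\<forall>\<^sub>F k in sequentially. 1 \<le> m k"
  shows "\<exists>b c. \<forall>\<^sub>F k in sequentially. \<forall>g. quadratic_form \<alpha> (m k) (v(1 := g)) = \<alpha> 1 1 * g^2 + b k * g + c k"
proof -
  have "\<forall>\<^sub>F k in sequentially. \<forall>g. quadratic_form \<alpha> (m k) (v(1 := g)) = \<alpha> 1 1 * g^2
      + (\<Sum>j=2..m k. (\<alpha> 1 j + \<alpha> j 1) * v j) * g + (\<Sum>i=2..m k. \<Sum>j=2..m k. \<alpha> i j * v i * v j)"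
    using assms by eventually_elim (intro allI quadratic_form_fun_upd_first)
  then show ?thesis
    by (intro exI)
qed

lemma finite_quadratic_level_set:
  fixes a b c z :: "'a::idom"
  assumes "a \<noteq> 0"
  shows "finite {g. a * g^2 + b * g + c = z}"
proof -
  have "{g. a * g^2 + b * g + c = z} = {g. poly [:c - z, b, a:] g = 0}"
    by (auto simp: algebra_simps power2_eq_square)
  moreover have "finite {g. poly [:c - z, b, a:] g = 0}"
    by (rule poly_roots_finite) (use assms in simp)
  ultimately show ?thesis
    by simp
qed

lemma tendsto_quadratic_family:
  fixes F :: "nat \<Rightarrow> real \<Rightarrow> real"
  assumes quad: "\<forall>\<^sub>F k in sequentially. \<forall>g. F k g = a * g^2 + b k * g + c k"
    and "g1 \<noteq> g2" and "convergent (\<lambda>k. F k g1)" and "convergent (\<lambda>k. F k g2)"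
  obtains B C where "\<And>g. (\<lambda>k. F k g) \<longlonglongrightarrow> a * g^2 + B * g + C"
proof -
  obtain L1 L2 where L1: "(\<lambda>k. F k g1) \<longlonglongrightarrow> L1" and L2: "(\<lambda>k. F k g2) \<longlonglongrightarrow> L2"
    using assms(3,4) by (auto simp: convergent_def)
  \<comment> \<open>The coefficients are recovered linearly from the values at \<open>g1\<close> and \<open>g2\<close>.\<close>
  have "\<forall>\<^sub>F k in sequentially. (F k g1 - F k g2 - a * (g1^2 - g2^2)) / (g1 - g2) = b k"
    using quad by eventually_elim (use \<open>g1 \<noteq> g2\<close> in \<open>simp add: field_simps\<close>)
  moreover have "(\<lambda>k. (F k g1 - F k g2 - a * (g1^2 - g2^2)) / (g1 - g2))
      \<longlonglongrightarrow> (L1 - L2 - a * (g1^2 - g2^2)) / (g1 - g2)"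
    using \<open>g1 \<noteq> g2\<close> by (intro tendsto_intros L1 L2) simp
  ultimately have b: "b \<longlonglongrightarrow> (L1 - L2 - a * (g1^2 - g2^2)) / (g1 - g2)" (is "_ \<longlonglongrightarrow> ?B")
    by (rule Lim_transform_eventually[rotated])
  have "\<forall>\<^sub>F k in sequentially. F k g1 - a * g1^2 - b k * g1 = c k"
    using quad by eventually_elim simp
  moreover have "(\<lambda>k. F k g1 - a * g1^2 - b k * g1) \<longlonglongrightarrow> L1 - a * g1^2 - ?B * g1" (is "_ \<longlonglongrightarrow> ?C")
    by (intro tendsto_intros L1 b)
  ultimately have c: "c \<longlonglongrightarrow> ?C"
    by (rule Lim_transform_eventually[rotated])
  have "(\<lambda>k. F k g) \<longlonglongrightarrow> a * g^2 + ?B * g + ?C" for g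
  proof (rule Lim_transform_eventually)
    show "(\<lambda>k. a * g^2 + b k * g + c k) \<longlonglongrightarrow> a * g^2 + ?B * g + ?C"
      by (intro tendsto_intros b c)
    show "\<forall>\<^sub>F k in sequentially. a * g^2 + b k * g + c k = F k g"
      using quad by eventually_elim simp
  qed
  then show ?thesis by (rule that)
qed

lemma finite_level_set_of_quadratic_limit:
  fixes F :: "nat \<Rightarrow> real \<Rightarrow> real"
  assumes "\<forall>\<^sub>F k in sequentially. \<forall>g. F k g = a * g^2 + b k * g + c k" and "a \<noteq> 0"
    and "g1 \<noteq> g2" and "convergent (\<lambda>k. F k g1)" and "convergent (\<lambda>k. F k g2)"
  shows "finite {g. lim (\<lambda>k. F k g) = z}"
proof -
  obtain B C where lim: "\<And>g. (\<lambda>k. F k g) \<longlonglongrightarrow> a * g^2 + B * g + C"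
    using tendsto_quadratic_family[OF assms(1,3-5)] by blast
  have "{g. lim (\<lambda>k. F k g) = z} = {g. a * g^2 + B * g + C = z}"
    using limI[OF lim] by auto
  with \<open>a \<noteq> 0\<close> show ?thesis
    by (simp add: finite_quadratic_level_set)
qed

lemma strict_mono_subseq_eventually:
  assumes "\<And>k. eventually (P k) sequentially"
  obtains s :: "nat \<Rightarrow> nat" where "strict_mono s" and "\<And>k. P k (s k)"
proof -
  obtain N where N: "\<And>k n. n \<ge> N k \<Longrightarrow> P k n"
    using assms unfolding eventually_sequentially by metis
  define s where "s k = k + (\<Sum>i\<le>k. N i)" for k
  have "strict_mono s"
    by (rule strict_monoI_Suc) (simp add: s_def)
  moreover have "P k (s k)" for k
    using member_le_sum[of k "{..k}" N] by (intro N) (simp add: s_def)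
  ultimately show ?thesis by (rule that)
qed

text \<open>Borel--Cantelli, along a subsequence on which the error exceeds \<open>2^-k\<close> with probability
  less than \<open>2^-k\<close>.\<close>

lemma conv_in_prob_imp_AE_LIMSEQ_subseq:
  fixes X :: "nat \<Rightarrow> 'a \<Rightarrow> real"
  assumes "prob_space M" and [measurable]: "\<And>n. X n \<in> borel_measurable M" "Z \<in> borel_measurable M"
    and conv: "conv_in_prob M X Z"
  obtains s where "strict_mono s" and "AE x in M. (\<lambda>k. X (s k) x) \<longlonglongrightarrow> Z x"
proof -
  interpret prob_space M by fact
  define A where "A k n = {x \<in> space M. (1/2)^k \<le> \<bar>X n x - Z x\<bar>}" for k n
  have "eventually (\<lambda>n. measure M (A k n) < (1/2)^k) sequentially" for k :: nat
    using conv unfolding conv_in_prob_def A_def by (intro order_tendstoD(2)[where y = 0]) auto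
  then obtain s where s: "strict_mono s" and A_small: "\<And>k. measure M (A k (s k)) < (1/2)^k"
    using strict_mono_subseq_eventually[where P = "\<lambda>k n. measure M (A k n) < (1/2)^k"] by blast
  have "summable (\<lambda>k. measure M (A k (s k)))"
    by (rule summable_comparison_test'[of "\<lambda>k. (1/2::real)^k" 0])
       (use A_small in \<open>auto intro: less_imp_le simp: summable_geometric\<close>)
  then have "AE x in M. \<forall>\<^sub>F k in sequentially. x \<in> space M - A k (s k)"
    by (intro borel_cantelli_AE1) (auto simp: A_def emeasure_eq_measure)
  then have "AE x in M. (\<lambda>k. X (s k) x) \<longlonglongrightarrow> Z x"
  proof eventually_elim
    case (elim x)
    have "(\<lambda>k. X (s k) x - Z x) \<longlonglongrightarrow> 0"
    proof (rule Lim_null_comparison)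
      show "\<forall>\<^sub>F k in sequentially. norm (X (s k) x - Z x) \<le> (1/2)^k"
        using elim by eventually_elim (auto simp: A_def)
    qed (rule LIMSEQ_power_zero, simp)
    then show ?case by (simp add: LIM_zero_iff)
  qed
  with s show ?thesis by (rule that)
qed

lemma measurable_pair_fun_upd[measurable]:
  "(\<lambda>p. ((fst p)(i := snd p)) j) \<in> borel_measurable (PiM (I - {i}) (\<lambda>_. borel) \<Otimes>\<^sub>M borel)"
proof -
  consider "j = i" | "j \<in> I - {i}" | "j \<notin> I" "j \<noteq> i"
    by blast
  then show ?thesis
  proof cases
    case 2
    then have "(\<lambda>p. fst p j) \<in> borel_measurable (PiM (I - {i}) (\<lambda>_. borel) \<Otimes>\<^sub>M borel)"
      by (intro measurable_compose[OF measurable_fst measurable_component_singleton])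
    with 2 show ?thesis by simp
  next
    case 3
    \<comment> \<open>Points of \<open>PiM\<close> are extensional, so off the index set the coordinate is constant.\<close>
    then have "((fst p)(i := snd p)) j = undefined" if "p \<in> space (PiM (I - {i}) (\<lambda>_. borel) \<Otimes>\<^sub>M borel)" for p
      using that by (auto simp: space_pair_measure space_PiM PiE_def extensional_def)
    then show ?thesis
      by (subst measurable_cong[where g = "\<lambda>_. undefined"]) auto
  qed simp
qed

lemma borel_measurable_quadratic_form_fun_upd[measurable]:
  "(\<lambda>p. quadratic_form \<alpha> m ((fst p)(i := snd p)))
    \<in> borel_measurable (PiM (I - {i}) (\<lambda>_. borel) \<Otimes>\<^sub>M (borel :: real measure))"
  unfolding quadratic_form_def by measurable

lemma (in prob_space) distr_split_coordinate_eq_pair_measure: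
  assumes ind: "indep_vars M' X I" and "i \<in> I"
  shows "distr M (PiM (I - {i}) M' \<Otimes>\<^sub>M M' i) (\<lambda>\<omega>. (restrict (\<lambda>j. X j \<omega>) (I - {i}), X i \<omega>))
       = distr M (PiM (I - {i}) M') (\<lambda>\<omega>. restrict (\<lambda>j. X j \<omega>) (I - {i})) \<Otimes>\<^sub>M distr M (M' i) (X i)"
    (is "_ = ?Q \<Otimes>\<^sub>M _")
proof -
  let ?S = "PiM (I - {i}) M'" and ?T = "PiM {i} M'"
  let ?V = "\<lambda>\<omega>. restrict (\<lambda>j. X j \<omega>) (I - {i})" and ?U = "\<lambda>\<omega>. restrict (\<lambda>j. X j \<omega>) {i}"
  have "indep_var ?S ?V ?T ?U"
    using assms by (intro indep_var_restrict) auto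
  then have V: "?V \<in> measurable M ?S" and U: "?U \<in> measurable M ?T"
    and joint: "?Q \<Otimes>\<^sub>M distr M ?T ?U = distr M (?S \<Otimes>\<^sub>M ?T) (\<lambda>\<omega>. (?V \<omega>, ?U \<omega>))"
    unfolding indep_var_distribution_eq by auto
  have ev: "(\<lambda>u. u i) \<in> measurable ?T (M' i)"
    by (rule measurable_component_singleton) simp
  interpret T: prob_space "distr (distr M ?T ?U) (M' i) (\<lambda>u. u i)"
    using U ev by (intro prob_space.prob_space_distr prob_space_distr) auto
  have "?Q \<Otimes>\<^sub>M distr M (M' i) (X i)
      = distr ?Q ?S (\<lambda>v. v) \<Otimes>\<^sub>M distr (distr M ?T ?U) (M' i) (\<lambda>u. u i)"
    using U ev by (simp add: distr_distr comp_def distr_id2)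
  also have "\<dots> = distr (?Q \<Otimes>\<^sub>M distr M ?T ?U) (?S \<Otimes>\<^sub>M M' i) (\<lambda>(v, u). (v, u i))"
    using ev by (intro pair_measure_distr) (auto simp: T.sigma_finite_measure_axioms)
  also have "\<dots> = distr M (?S \<Otimes>\<^sub>M M' i) (\<lambda>\<omega>. (?V \<omega>, X i \<omega>))"
    unfolding joint using V U ev by (subst distr_distr) (auto simp: comp_def)
  finally show ?thesis ..
qed

lemma distributed_singleton_in_null_sets:
  assumes "distributed M lborel X f"
  shows "{c} \<in> null_sets (distr M borel X)"
proof -
  have "distr M borel X = density lborel f"
    using distributed_distr_eq_density[OF assms] by (metis distr_cong sets_lborel)
  moreover have "emeasure (density lborel f) {c} = 0"
    using distributed_borel_measurable[OF assms]
    by (subst emeasure_density) (auto intro: nn_integral_null_set finite_imp_null_set_lborel)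
  ultimately show ?thesis
    by (simp add: null_sets_def)
qed

lemma (in prob_space) AE_obtain_distinct:
  assumes "\<And>c. {c} \<in> null_sets M" and "AE x in M. P x"
  obtains x y where "x \<noteq> y" and "P x" and "P y"
proof -
  have ex: "\<exists>x. Q x" if "AE x in M. Q x" for Q
  proof (rule ccontr)
    assume "\<nexists>x. Q x"
    with that have "AE x in M. False"
      by (auto elim: eventually_mono)
    then show False
      by (simp add: AE_False)
  qed
  obtain x where "P x"
    using ex[OF assms(2)] by blast
  have "AE y in M. y \<noteq> x"
    by (rule AE_I'[OF assms(1)[of x]]) auto
  with assms(2) have "AE y in M. P y \<and> y \<noteq> x"
    by eventually_elim simp
  then obtain y where "P y" "y \<noteq> x"
    using ex by blast
  with \<open>P x\<close> show ?thesis
    using that by blast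
qed

lemma finite_in_null_sets:
  assumes "\<And>c. {c} \<in> null_sets M" and "finite A"
  shows "A \<in> null_sets M"
proof -
  have "(\<Union>c\<in>A. {c}) \<in> null_sets M"
    using assms by (intro null_sets.finite_UN) auto
  then show ?thesis by simp
qed

lemma level_set_of_quadratic_limit_null:
  fixes F :: "nat \<Rightarrow> 'a \<times> real \<Rightarrow> real" and N :: "real measure"
  assumes "pair_prob_space Q N" and atomless: "\<And>c. {c} \<in> null_sets N"
    and [measurable]: "\<And>k. F k \<in> borel_measurable (Q \<Otimes>\<^sub>M N)"
    and quad: "\<And>v. v \<in> space Q \<Longrightarrow>
      \<exists>b c. \<forall>\<^sub>F k in sequentially. \<forall>g. F k (v, g) = a * g^2 + b k * g + c k"
    and "a \<noteq> 0" and conv: "AE p in Q \<Otimes>\<^sub>M N. convergent (\<lambda>k. F k p)"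
  shows "{p \<in> space (Q \<Otimes>\<^sub>M N). lim (\<lambda>k. F k p) = z} \<in> null_sets (Q \<Otimes>\<^sub>M N)"
    (is "?A \<in> _")
proof -
  interpret pair_prob_space Q N by fact
  have A[measurable]: "?A \<in> sets (Q \<Otimes>\<^sub>M N)"
    by measurable
  have "AE v in Q. emeasure N (Pair v -` ?A) = 0"
    using AE_space AE_pair[OF conv]
  proof eventually_elim
    case (elim v)
    obtain g1 g2 where "g1 \<noteq> g2" "convergent (\<lambda>k. F k (v, g1))" "convergent (\<lambda>k. F k (v, g2))"
      using M2.AE_obtain_distinct[OF atomless elim(2)] by blast
    moreover obtain b c where "\<forall>\<^sub>F k in sequentially. \<forall>g. F k (v, g) = a * g^2 + b k * g + c k"
      using quad[OF elim(1)] by blast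
    ultimately have "finite {g. lim (\<lambda>k. F k (v, g)) = z}"
      using \<open>a \<noteq> 0\<close> by (intro finite_level_set_of_quadratic_limit[where F = "\<lambda>k g. F k (v, g)"])
    then have "finite (Pair v -` ?A)"
      by (rule finite_subset[rotated]) auto
    then show ?case
      by (intro null_setsD1 finite_in_null_sets[OF atomless])
  qed
  then have "emeasure (Q \<Otimes>\<^sub>M N) ?A = (\<integral>\<^sup>+ v. 0 \<partial>Q)"
    by (simp add: M2.emeasure_pair_measure_alt nn_integral_cong_AE)
  then show ?thesis
    by (simp add: null_sets_def)
qed

text \<open>Independence of \<open>V\<close> and \<open>X\<close> is expressed as factorisation of their joint law, because
  \<open>indep_var\<close> requires both variables to take values in the same type.\<close>

lemma (in prob_space) measure_level_set_of_quadratic_limit: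
  fixes V :: "'a \<Rightarrow> 'b" and X :: "'a \<Rightarrow> real" and F :: "nat \<Rightarrow> 'b \<times> real \<Rightarrow> real"
  assumes [measurable]: "V \<in> measurable M S" "X \<in> borel_measurable M" "Z \<in> borel_measurable M"
    and indep: "distr M (S \<Otimes>\<^sub>M borel) (\<lambda>x. (V x, X x)) = distr M S V \<Otimes>\<^sub>M distr M borel X"
    and atomless: "\<And>c. {c} \<in> null_sets (distr M borel X)"
    and [measurable]: "\<And>k. F k \<in> borel_measurable (S \<Otimes>\<^sub>M borel)"
    and quad: "\<And>v. v \<in> space S \<Longrightarrow>
      \<exists>b c. \<forall>\<^sub>F k in sequentially. \<forall>g. F k (v, g) = a * g^2 + b k * g + c k"
    and "a \<noteq> 0" and lim: "AE x in M. (\<lambda>k. F k (V x, X x)) \<longlonglongrightarrow> Z x"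
  shows "measure M {x \<in> space M. Z x = z} = 0"
proof -
  let ?W = "\<lambda>x. (V x, X x)" and ?A = "{p \<in> space (S \<Otimes>\<^sub>M borel). lim (\<lambda>k. F k p) = z}"
  have sets: "sets (distr M S V \<Otimes>\<^sub>M distr M borel X) = sets (S \<Otimes>\<^sub>M borel)"
    by simp
  have pps: "pair_prob_space (distr M S V) (distr M borel X)"
    by (simp add: pair_prob_space_def pair_sigma_finite_def prob_space_distr
        prob_space_imp_sigma_finite)
  have conv: "AE p in distr M (S \<Otimes>\<^sub>M borel) ?W. convergent (\<lambda>k. F k p)"
  proof (subst AE_distr_iff)
    show "{p \<in> space (S \<Otimes>\<^sub>M borel). convergent (\<lambda>k. F k p)} \<in> sets (S \<Otimes>\<^sub>M borel)"
      unfolding Cauchy_convergent_iff[symmetric] by (rule sets_Collect_Cauchy) measurable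
    show "AE x in M. convergent (\<lambda>k. F k (V x, X x))"
      using lim by (auto simp: convergent_def elim!: eventually_mono)
  qed simp
  have "?A \<in> null_sets (distr M (S \<Otimes>\<^sub>M borel) ?W)"
    using level_set_of_quadratic_limit_null[OF pps atomless _ quad \<open>a \<noteq> 0\<close> conv[unfolded indep]]
    unfolding indep sets_eq_imp_space_eq[OF sets] by (simp add: measurable_cong_sets[OF sets refl])
  then have "measure (distr M (S \<Otimes>\<^sub>M borel) ?W) ?A = 0"
    by (simp add: measure_def null_setsD1)
  then have "measure M (?W -` ?A \<inter> space M) = 0"
    by (subst (asm) measure_distr) auto
  moreover have "measure M {x \<in> space M. Z x = z} = measure M (?W -` ?A \<inter> space M)"
  proof (rule measure_eq_AE)
    have W: "x \<in> space M \<Longrightarrow> ?W x \<in> space (S \<Otimes>\<^sub>M borel)" for x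
      by (auto simp: space_pair_measure measurable_space[of V M S])
    show "AE x in M. x \<in> {x \<in> space M. Z x = z} \<longleftrightarrow> x \<in> ?W -` ?A \<inter> space M"
      using AE_space lim by eventually_elim (auto simp: limI W)
  qed measurable
  ultimately show ?thesis
    by simp
qed

theorem mainTheorem13:
  fixes M :: "'a measure" and G :: "nat \<Rightarrow> 'a \<Rightarrow> real"
    and \<alpha> :: "nat \<Rightarrow> nat \<Rightarrow> real" and Z :: "'a \<Rightarrow> real"
  assumes "prob_space M"
    and "prob_space.indep_vars M (\<lambda>_. borel) G {1..}"
    and "\<And>j. j \<ge> 1 \<Longrightarrow> distributed M lborel (G j) std_normal_density"
    and "Z \<in> borel_measurable M"
    and "conv_in_prob M (\<lambda>n x. \<Sum>j=1..2*n. \<Sum>k=1..2*n. \<alpha> j k * G j x * G k x) Z"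
    and "\<alpha> 1 1 \<noteq> 0"
  shows "\<forall>z::real. measure M {x \<in> space M. Z x = z} = 0"
proof
  fix z :: real
  interpret prob_space M by fact
  let ?S = "PiM ({1..} - {1}) (\<lambda>_. borel) :: (nat \<Rightarrow> real) measure"
  define V where "V x = restrict (\<lambda>j. G j x) ({1..} - {1})" for x
  define f where "f n p = quadratic_form \<alpha> (2 * n) ((fst p)(1 := snd p))" for n p
  have Gm[measurable]: "G j \<in> borel_measurable M" if "j \<ge> 1" for j
    using distributed_measurable[OF assms(3)[OF that]] by simp
  have Vm[measurable]: "V \<in> measurable M ?S"
    unfolding V_def by (rule measurable_restrict) auto
  have fm[measurable]: "f n \<in> borel_measurable (?S \<Otimes>\<^sub>M borel)" for n
    unfolding f_def by measurable
  have "(\<Sum>j=1..2*n. \<Sum>k=1..2*n. \<alpha> j k * G j x * G k x) = f n (V x, G 1 x)" for n x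
    unfolding f_def quadratic_form_def V_def by (intro sum.cong) auto
  with assms(5) have conv: "conv_in_prob M (\<lambda>n x. f n (V x, G 1 x)) Z"
    by simp
  have "(\<lambda>x. f n (V x, G 1 x)) \<in> borel_measurable M" for n
    by measurable
  then obtain s where "strict_mono s" and lim: "AE x in M. (\<lambda>k. f (s k) (V x, G 1 x)) \<longlonglongrightarrow> Z x"
    using conv_in_prob_imp_AE_LIMSEQ_subseq[OF assms(1) _ assms(4) conv] by blast
  have "\<forall>\<^sub>F k in sequentially. 1 \<le> 2 * s k"
    by (rule eventually_sequentiallyI[of 1]) (use seq_suble[OF \<open>strict_mono s\<close>] in \<open>fastforce intro: order_trans\<close>)
  show "measure M {x \<in> space M. Z x = z} = 0"
  proof (rule measure_level_set_of_quadratic_limit[OF Vm Gm[of 1] assms(4) _ _ fm _ assms(6) lim])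
    show "distr M (?S \<Otimes>\<^sub>M borel) (\<lambda>x. (V x, G 1 x)) = distr M ?S V \<Otimes>\<^sub>M distr M borel (G 1)"
      unfolding V_def by (rule distr_split_coordinate_eq_pair_measure[OF assms(2)]) simp
    show "{c} \<in> null_sets (distr M borel (G 1))" for c
      by (rule distributed_singleton_in_null_sets[OF assms(3)]) simp
    show "\<exists>b c. \<forall>\<^sub>F k in sequentially. \<forall>g. f (s k) (v, g) = \<alpha> 1 1 * g^2 + b k * g + c k" for v
      unfolding f_def fst_conv snd_conv by (rule eventually_quadratic_form_fun_upd_first) fact
  qed simp
qed

end
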